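(* Let $\rho:\,]0,+\infty[\,\to\,]0,+\infty[$ be a continuous function (the equation of state $\rho=\rho(P)$, so that $\rho(P)>0$ for $P>0$). Let $R>0$ and $M>0$ satisfy $1-\frac{2M}{R}>0$. Suppose $(m,P)$ is a $C^1$ solution on $]0,R[$ of the Tolman–Oppenheimer–Volkoff system $$\frac{dm}{dr}=4\pi r^2\rho,\qquad \frac{dP}{dr}=-(\rho+P)\,\frac{m+4\pi r^3\rho}{r^2\left(1-\frac{2m}{r}\right)},\qquad \rho=\rho(P(r)),$$ such that for every $r\in\,]0,R[$ the point $(r,m(r),P(r))$ lies in the domain $$\mathsf{D}=\Big\{\,0<r,\ 0<P,\ 0<m+4\pi r^3\rho(P),\ 0<1-\tfrac{2m}{r}\,\Big\},$$ and such that $m(r)\to M$ and $P(r)\to 0$ as $r\to R-0$. Assume moreover that $P(r)$ converges to a finite limit $P_{\mathsf{O}}<\infty$ as $r\to +0$. Then $m(r)\to 0$ as $r\to+0$, and $$m(r)=\int_0^r 4\pi\rho(P(r'))\,(r')^2\,dr'\qquad\text{for all } 0<r<R.$$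
   Context: Geometrical units are used, i.e. the gravitational constant and the speed of light are set equal to $1$. The system is the static spherically symmetric Einstein–Euler (Tolman–Oppenheimer–Volkoff) system for a perfect fluid with pressure $P$, density $\rho=\rho(P)$ and mass function $m(r)$; the data $(m,P)=(M,0)$ at $r=R$ correspond to matching with the exterior Schwarzschild metric of mass $M$ on the sphere $r=R$. *)

theory Defs
  imports "HOL-Analysis.Analysis"
begin

end

theory Submission
  imports Defs
begin

(* Along a solution in the domain the pressure gradient is negative, so P increases towards the
   centre and P r \<le> P\<^sub>O; in particular P\<^sub>O > 0, where rho is continuous, so rho (P r) has a
   finite limit at 0. The domain conditions -4 pi r^3 rho (P r) < m r < r/2 then squeeze m r to 0,
   and the integral formula is the fundamental theorem of calculus for m extended by 0 at r = 0. *)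

lemma has_integral_from_right_limit:
  fixes f f' :: "real \<Rightarrow> 'a::real_normed_vector"
  assumes "a < r"
    and der: "\<And>x. x \<in> {a<..r} \<Longrightarrow> (f has_vector_derivative f' x) (at x)"
    and lim: "(f \<longlongrightarrow> L) (at_right a)"
  shows "(f' has_integral f r - L) {a..r}"
proof -
  define g where "g = f(a := L)"
  have der_g: "(g has_vector_derivative f' x) (at x)" if "x \<in> {a<..r}" for x
    using der[OF that] by (rule has_vector_derivative_transform_within_open[of _ _ _ "-{a}"])
      (use that in \<open>auto simp: g_def\<close>)
  have "continuous (at x within {a..r}) g" if "x \<in> {a..r}" for x
  proof (cases "x = a")
    case True
    have "(g \<longlongrightarrow> L) (at_right a)"
      using lim eventually_at_right_less[of a]
      by (rule Lim_transform_eventually[OF _ eventually_mono]) (simp add: g_def)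
    then show ?thesis
      using True \<open>a < r\<close> by (simp add: continuous_within at_within_Icc_at_right g_def)
  next
    case False
    then show ?thesis
      using that der_g[of x] continuous_at_imp_continuous_at_within
        has_vector_derivative_continuous by fastforce
  qed
  then have "(f' has_integral g r - g a) {a..r}"
    using \<open>a < r\<close> der_g
    by (intro fundamental_theorem_of_calculus_interior continuous_on_eq_continuous_within[THEN iffD2])
      auto
  then show ?thesis
    using \<open>a < r\<close> by (simp add: g_def)
qed

lemma le_right_limit_if_antimono_on:
  fixes f :: "real \<Rightarrow> real"
  assumes antimono: "antimono_on {a<..<b} f"
    and lim: "(f \<longlongrightarrow> L) (at_right a)"
    and "x \<in> {a<..<b}"
  shows "f x \<le> L"
proof (rule tendsto_lowerbound[OF lim])
  show "\<forall>\<^sub>F s in at_right a. f x \<le> f s"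
    unfolding eventually_at_right_field using assms(3)
    by (intro exI[of _ x]) (auto intro: monotone_onD[OF antimono])
qed simp

lemma tov_pressure_gradient_neg:
  fixes r m p d :: real
  assumes "0 < r" "0 < p" "0 < d" "0 < m + 4 * pi * r^3 * d" "0 < 1 - 2 * m / r"
  shows "- (d + p) * (m + 4 * pi * r^3 * d) / (r^2 * (1 - 2 * m / r)) < 0"
proof (rule divide_neg_pos)
  show "- (d + p) * (m + 4 * pi * r^3 * d) < 0"
    using assms by (intro mult_neg_pos) auto
  show "0 < r^2 * (1 - 2 * m / r)"
    using assms by simp
qed

lemma tov_pressure_antimono:
  fixes rho m P :: "real \<Rightarrow> real"
  assumes rho_pos: "\<And>p. p > 0 \<Longrightarrow> rho p > 0"
    and dP: "\<And>r. r \<in> {0<..<R} \<Longrightarrow>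
               (P has_real_derivative
                  - (rho (P r) + P r) * (m r + 4 * pi * r^3 * rho (P r))
                    / (r^2 * (1 - 2 * m r / r))) (at r)"
    and dom: "\<And>r. r \<in> {0<..<R} \<Longrightarrow>
               0 < P r \<and> 0 < m r + 4 * pi * r^3 * rho (P r) \<and> 0 < 1 - 2 * m r / r"
  shows "antimono_on {0<..<R} P"
proof (rule monotone_onI)
  fix s t assume st: "s \<in> {0<..<R}" "t \<in> {0<..<R}" "s \<le> t"
  show "P t \<le> P s"
  proof (rule DERIV_nonpos_imp_nonincreasing[OF \<open>s \<le> t\<close>])
    fix x assume "s \<le> x" "x \<le> t"
    with st have x: "x \<in> {0<..<R}"
      by auto
    then show "\<exists>y. DERIV P x :> y \<and> y \<le> 0"
      using dP[OF x] dom[OF x] rho_pos tov_pressure_gradient_neg[of x "P x" "rho (P x)" "m x"]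
      by (auto intro: less_imp_le)
  qed
qed

lemma tov_mass_tendsto_zero:
  fixes m d :: "real \<Rightarrow> real"
  assumes d_lim: "(d \<longlongrightarrow> c) (at_right 0)"
    and dom: "\<forall>\<^sub>F r in at_right 0. 0 < m r + 4 * pi * r^3 * d r \<and> 0 < 1 - 2 * m r / r"
  shows "(m \<longlongrightarrow> 0) (at_right 0)"
proof (rule tendsto_sandwich)
  show "((\<lambda>r. - (4 * pi * r^3 * d r)) \<longlongrightarrow> 0) (at_right 0)"
  proof -
    have "((\<lambda>r. - (4 * pi * r^3 * d r)) \<longlongrightarrow> - (4 * pi * 0^3 * c)) (at_right 0)"
      by (intro tendsto_intros d_lim)
    then show ?thesis
      by simp
  qed
  show "((\<lambda>r. r / 2) \<longlongrightarrow> 0) (at_right (0::real))"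
    by (auto intro!: tendsto_eq_intros)
  show "\<forall>\<^sub>F r in at_right 0. - (4 * pi * r^3 * d r) \<le> m r"
    using dom by eventually_elim linarith
  show "\<forall>\<^sub>F r in at_right 0. m r \<le> r / 2"
    using dom eventually_at_right_less[of 0]
    by eventually_elim (simp add: field_simps)
qed

theorem mainTheorem1:
  fixes rho :: "real \<Rightarrow> real" and m P :: "real \<Rightarrow> real" and R M P\<^sub>O :: real
  assumes rho_cont: "continuous_on {0<..} rho"
    and rho_pos: "\<And>p. p > 0 \<Longrightarrow> rho p > 0"
    and R_pos: "R > 0" and M_pos: "M > 0" and RM: "1 - 2 * M / R > 0"
    and dm: "\<And>r. r \<in> {0<..<R} \<Longrightarrow>
               (m has_real_derivative 4 * pi * r^2 * rho (P r)) (at r)"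
    and dP: "\<And>r. r \<in> {0<..<R} \<Longrightarrow>
               (P has_real_derivative
                  - (rho (P r) + P r) * (m r + 4 * pi * r^3 * rho (P r))
                    / (r^2 * (1 - 2 * m r / r))) (at r)"
    and C1: "continuous_on {0<..<R} (deriv m)" "continuous_on {0<..<R} (deriv P)"
    and dom: "\<And>r. r \<in> {0<..<R} \<Longrightarrow>
               0 < P r \<and> 0 < m r + 4 * pi * r^3 * rho (P r) \<and> 0 < 1 - 2 * m r / r"
    and limR_m: "(m \<longlongrightarrow> M) (at_left R)"
    and limR_P: "(P \<longlongrightarrow> 0) (at_left R)"
    and lim0_P: "(P \<longlongrightarrow> P\<^sub>O) (at_right 0)"
  shows "(m \<longlongrightarrow> 0) (at_right 0) \<and>
         (\<forall>r \<in> {0<..<R}. ((\<lambda>s. 4 * pi * rho (P s) * s^2) has_integral m r) {0..r})"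
proof -
  have P_le: "P r \<le> P\<^sub>O" if "r \<in> {0<..<R}" for r
    using tov_pressure_antimono[OF rho_pos dP dom] lim0_P that
    by (rule le_right_limit_if_antimono_on)
  have "0 < P\<^sub>O"
    using P_le[of "R / 2"] dom[of "R / 2"] R_pos by force
  have near_0: "\<forall>\<^sub>F r in at_right 0. r \<in> {0<..<R}"
    using R_pos by (auto simp: eventually_at_right_field intro!: exI[of _ R])
  have rho_lim: "((\<lambda>r. rho (P r)) \<longlongrightarrow> rho P\<^sub>O) (at_right 0)"
    using \<open>0 < P\<^sub>O\<close> near_0 dom
    by (intro continuous_on_tendsto_compose[OF rho_cont lim0_P]) (auto elim: eventually_mono)
  have m_lim: "(m \<longlongrightarrow> 0) (at_right 0)"
    using near_0 dom by (intro tov_mass_tendsto_zero[OF rho_lim]) (auto elim: eventually_mono)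
  have "((\<lambda>s. 4 * pi * rho (P s) * s^2) has_integral m r) {0..r}" if "r \<in> {0<..<R}" for r
    using has_integral_from_right_limit[OF _ _ m_lim, of r "\<lambda>s. 4 * pi * rho (P s) * s^2"] that dm
    by (auto simp: has_real_derivative_iff_has_vector_derivative[symmetric] mult_ac)
  with m_lim show ?thesis
    by blast
qed

end
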